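(* Let $G=(V,E)$ be a non-bipartite graph with $n=|V|\ge 5$ vertices, and let $K,K'$ be $k$-cliques of $G$ where $n-k-1=\binom{k}{2}$. Let $H$ be the bipartite graph with vertex set $V\cup E$ (bipartition $\{V,E\}$) and edge set $\{\{v,e\} : v\in V,\ e\in E,\ v\notin e\}$. Let $p=n-k-1$. Let $S$ be obtained from $(V\setminus K)\cup E(K)$ by removing an arbitrary vertex of $V\setminus K$, and let $S'$ be obtained from $(V\setminus K')\cup E(K')$ by removing an arbitrary vertex of $V\setminus K'$ (so $S,S'$ are $(p,p)$-bicliques of $H$). If there is a TJ-sequence of $k$-cliques from $K$ to $K'$ in $G$, then there is a TJ-sequence of $(p,p)$-bicliques from $S$ to $S'$ in $H$.
   Context: For $U\subseteq V$, $E(U)$ denotes the set of edges of $G$ with both endpoints in $U$. A $k$-clique is a set of $k$ pairwise adjacent vertices. A TJ-sequence of $k$-cliques is a sequence $K_0,\dots,K_\ell$ of $k$-cliques with $|K_i\setminus K_{i+1}|=|K_{i+1}\setminus K_i|=1$ for all $i$. A vertex set $S$ is a $(p,q)$-biclique of $H$ if $H[S]$ is isomorphic to $K_{p,q}$; a TJ-sequence of $(p,p)$-bicliques is a sequence $S_0,\dots,S_\ell$ of $(p,p)$-bicliques with $|S_i\setminus S_{i+1}|=|S_{i+1}\setminus S_i|=1$ for all $i$. *)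

theory Defs
  imports Main
begin

definition simple_graph :: "'a set \<Rightarrow> 'a set set \<Rightarrow> bool" where
  "simple_graph V E \<longleftrightarrow> finite V \<and> (\<forall>e\<in>E. e \<subseteq> V \<and> card e = 2)"

definition bipartite :: "'a set \<Rightarrow> 'a set set \<Rightarrow> bool" where
  "bipartite V E \<longleftrightarrow> (\<exists>A B. A \<inter> B = {} \<and> A \<union> B = V \<and>
      (\<forall>e\<in>E. e \<inter> A \<noteq> {} \<and> e \<inter> B \<noteq> {}))"

definition edges_in :: "'a set set \<Rightarrow> 'a set \<Rightarrow> 'a set set" where
  "edges_in E U = {e \<in> E. e \<subseteq> U}"

definition is_clique :: "'a set \<Rightarrow> 'a set set \<Rightarrow> nat \<Rightarrow> 'a set \<Rightarrow> bool" where
  "is_clique V E k K \<longleftrightarrow> K \<subseteq> V \<and> finite K \<and> card K = k \<and>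
      (\<forall>u\<in>K. \<forall>v\<in>K. u \<noteq> v \<longrightarrow> {u, v} \<in> E)"

definition is_biclique :: "'b set \<Rightarrow> 'b set set \<Rightarrow> nat \<Rightarrow> nat \<Rightarrow> 'b set \<Rightarrow> bool" where
  "is_biclique VH EH p q S \<longleftrightarrow> S \<subseteq> VH \<and>
     (\<exists>A B. A \<inter> B = {} \<and> A \<union> B = S \<and> finite A \<and> finite B \<and> card A = p \<and> card B = q \<and>
        {e \<in> EH. e \<subseteq> S} = {{a, b} | a b. a \<in> A \<and> b \<in> B})"

definition tj_seq :: "('b set \<Rightarrow> bool) \<Rightarrow> 'b set list \<Rightarrow> 'b set \<Rightarrow> 'b set \<Rightarrow> bool" where
  "tj_seq P xs X Y \<longleftrightarrow> xs \<noteq> [] \<and> hd xs = X \<and> last xs = Y \<and> (\<forall>Z\<in>set xs. P Z) \<and>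
     (\<forall>i. Suc i < length xs \<longrightarrow>
        card (xs ! i - xs ! Suc i) = 1 \<and> card (xs ! Suc i - xs ! i) = 1)"

definition H_vertices :: "'a set \<Rightarrow> 'a set set \<Rightarrow> ('a + 'a set) set" where
  "H_vertices V E = Inl ` V \<union> Inr ` E"

definition H_edges :: "'a set \<Rightarrow> 'a set set \<Rightarrow> ('a + 'a set) set set" where
  "H_edges V E = {{Inl v, Inr e} | v e. v \<in> V \<and> e \<in> E \<and> v \<notin> e}"

end

theory Submission
  imports Defs
begin

text \<open>Write \<open>S(K, x) = (V - K - {x}) \<union> E(K)\<close>. Two \<open>(p,q)\<close>-bicliques \<open>A \<union> F\<close> and \<open>A' \<union> F'\<close>
  of \<open>H\<close> with \<open>A, A' \<subseteq> V\<close> and \<open>F, F' \<subseteq> E\<close> are joined by a TJ-sequence whenever no vertex of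
  \<open>A \<union> A'\<close> lies on an edge of \<open>F \<union> F'\<close>: exchange \<open>A\<close> for \<open>A'\<close> one vertex at a time, then \<open>F\<close>
  for \<open>F'\<close> one edge at a time; every intermediate set is again a biclique. If the cliques
  differ by \<open>K - K' = {u}\<close> and \<open>K' - K = {w}\<close>, this joins \<open>S(K, x)\<close> to \<open>S(K, w)\<close>, then to
  \<open>S(K', u)\<close> (both have vertex part \<open>V - (K \<union> K')\<close>), then to \<open>S(K', x')\<close>.\<close>

definition tj_step :: "('b set \<Rightarrow> bool) \<Rightarrow> 'b set \<Rightarrow> 'b set \<Rightarrow> bool" where
  "tj_step P X Y \<longleftrightarrow> P X \<and> P Y \<and> card (X - Y) = 1 \<and> card (Y - X) = 1"

lemma tj_seq_imp_rtranclp: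
  assumes "tj_seq P xs X Y"
  shows "(tj_step P)\<^sup>*\<^sup>* X Y"
  using assms
proof (induction xs arbitrary: X)
  case Nil
  then show ?case by (simp add: tj_seq_def)
next
  case (Cons Z xs)
  show ?case
  proof (cases xs)
    case Nil
    with Cons.prems show ?thesis by (auto simp: tj_seq_def)
  next
    case (Cons X' xs')
    have "tj_seq P xs X' Y"
      using Cons.prems \<open>xs = X' # xs'\<close> unfolding tj_seq_def by fastforce
    moreover have "tj_step P X X'"
      using Cons.prems \<open>xs = X' # xs'\<close> unfolding tj_seq_def tj_step_def by fastforce
    ultimately show ?thesis
      using Cons.IH by (blast intro: converse_rtranclp_into_rtranclp)
  qed
qed

lemma rtranclp_imp_tj_seq:
  assumes "(tj_step P)\<^sup>*\<^sup>* X Y" "P X"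
  shows "\<exists>xs. tj_seq P xs X Y"
  using assms
proof (induction rule: rtranclp_induct)
  case base
  then show ?case by (intro exI[of _ "[X]"]) (simp add: tj_seq_def)
next
  case (step Y Z)
  then obtain xs where xs: "tj_seq P xs X Y" by blast
  have "card ((xs @ [Z]) ! i - (xs @ [Z]) ! Suc i) = 1 \<and> card ((xs @ [Z]) ! Suc i - (xs @ [Z]) ! i) = 1"
    if i: "Suc i < length (xs @ [Z])" for i
  proof (cases "Suc i < length xs")
    case True
    with xs show ?thesis by (simp add: tj_seq_def nth_append)
  next
    case False
    with i have i_last: "i = length xs - 1"
      by simp
    with xs have "xs ! i = Y" "xs \<noteq> []"
      by (auto simp: tj_seq_def last_conv_nth)
    with i_last step.hyps(2) show ?thesis
      by (simp add: tj_step_def nth_append)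
  qed
  with xs step.hyps(2) have "tj_seq P (xs @ [Z]) X Z"
    by (auto simp: tj_seq_def tj_step_def)
  then show ?case by blast
qed

lemma rtranclp_tj_step_exchange:
  assumes "finite F" "finite F'" "card F = card F'"
    and "\<And>G. G \<subseteq> F \<union> F' \<Longrightarrow> card G = card F \<Longrightarrow> P G"
  shows "(tj_step P)\<^sup>*\<^sup>* F F'"
  using assms
proof (induction "card (F - F')" arbitrary: F rule: less_induct)
  case less
  show ?case
  proof (cases "F = F'")
    case False
    have "card (F' - F) = card (F - F')"
      using less.prems(1-3) by (simp add: card_Diff_subset_Int Int_commute)
    moreover have "F - F' \<noteq> {}"
      using less.prems(2,3) False card_subset_eq by blast
    ultimately obtain a b where a: "a \<in> F - F'" and b: "b \<in> F' - F"
      using less.prems(1,2) by (metis all_not_in_conv card_0_eq finite_Diff)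
    define F1 where "F1 = insert b (F - {a})"
    have card_F1: "card F1 = card F"
      using a b less.prems(1) card.remove[OF less.prems(1), of a] by (simp add: F1_def)
    have "tj_step P F F1"
      unfolding tj_step_def
    proof (intro conjI)
      show "P F"
        by (rule less.prems(4)) auto
      show "P F1"
        using card_F1 a b by (intro less.prems(4)) (auto simp: F1_def)
      have "F - F1 = {a}" "F1 - F = {b}"
        using a b by (auto simp: F1_def)
      then show "card (F - F1) = 1" "card (F1 - F) = 1"
        by simp_all
    qed
    moreover have "(tj_step P)\<^sup>*\<^sup>* F1 F'"
    proof (rule less.hyps)
      have "F1 - F' = F - F' - {a}"
        using b by (auto simp: F1_def)
      then show "card (F1 - F') < card (F - F')"
        using card_Diff1_less[of "F - F'" a] a less.prems(1) by auto
      show "P G" if "G \<subseteq> F1 \<union> F'" "card G = card F1" for G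
        using that card_F1 a b by (intro less.prems(4)) (auto simp: F1_def)
      show "finite F1" "card F1 = card F'"
        using less.prems(1,3) card_F1 by (simp_all add: F1_def)
    qed (rule less.prems(2))
    ultimately show ?thesis
      by (rule converse_rtranclp_into_rtranclp)
  qed simp
qed

lemma rtranclp_tj_step_image:
  assumes "inj g" "B \<inter> range g = {}"
    and "(tj_step (\<lambda>G. P (B \<union> g ` G)))\<^sup>*\<^sup>* F F'"
  shows "(tj_step P)\<^sup>*\<^sup>* (B \<union> g ` F) (B \<union> g ` F')"
  using assms(3)
proof (induction rule: rtranclp_induct)
  case (step G G')
  have "(B \<union> g ` X) - (B \<union> g ` Y) = g ` (X - Y)" for X Y
    using assms by (auto simp: inj_eq)
  then have "tj_step P (B \<union> g ` G) (B \<union> g ` G')"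
    using step.hyps(2) assms(1)
    by (simp add: tj_step_def card_image inj_on_subset[OF assms(1)])
  with step.IH show ?case by simp
qed simp

lemma simple_graph_finite:
  assumes "simple_graph V E"
  shows "finite V" "finite E"
  using assms finite_subset[of E "Pow V"] by (auto simp: simple_graph_def)

lemma H_induced_edges:
  assumes "A \<subseteq> V" "F \<subseteq> E" "\<forall>v\<in>A. \<forall>f\<in>F. v \<notin> f"
  shows "{e \<in> H_edges V E. e \<subseteq> Inl ` A \<union> Inr ` F} = {{a, b} | a b. a \<in> Inl ` A \<and> b \<in> Inr ` F}"
proof (intro equalityI subsetI)
  fix e assume "e \<in> {e \<in> H_edges V E. e \<subseteq> Inl ` A \<union> Inr ` F}"
  then obtain v f where "e = {Inl v, Inr f}" "Inl v \<in> Inl ` A" "Inr f \<in> Inr ` F"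
    unfolding H_edges_def by blast
  then show "e \<in> {{a, b} | a b. a \<in> Inl ` A \<and> b \<in> Inr ` F}"
    by blast
next
  fix e assume "e \<in> {{a, b} | a b. a \<in> Inl ` A \<and> b \<in> Inr ` F}"
  then obtain v f where e: "e = {Inl v, Inr f}" and "v \<in> A" "f \<in> F"
    by blast
  with assms have "e \<in> H_edges V E"
    unfolding H_edges_def by (intro CollectI exI conjI refl) auto
  with e \<open>v \<in> A\<close> \<open>f \<in> F\<close> show "e \<in> {e \<in> H_edges V E. e \<subseteq> Inl ` A \<union> Inr ` F}"
    by simp
qed

lemma is_biclique_H:
  assumes "simple_graph V E" "A \<subseteq> V" "F \<subseteq> E" "card A = p" "card F = q"
    and "\<forall>v\<in>A. \<forall>f\<in>F. v \<notin> f"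
  shows "is_biclique (H_vertices V E) (H_edges V E) p q (Inl ` A \<union> Inr ` F)"
proof -
  note simple_graph_finite[OF assms(1)]
  then have "finite A" "finite F"
    using assms(2,3) by (auto intro: finite_subset)
  moreover note H_induced_edges[OF assms(2,3,6)]
  ultimately show ?thesis
    using assms(2-5) unfolding is_biclique_def H_vertices_def
    by (intro conjI exI[of _ "Inl ` A"] exI[of _ "Inr ` F"]) (auto simp: card_image)
qed

lemma H_bicliques_connected:
  assumes "simple_graph V E" "A \<subseteq> V" "A' \<subseteq> V" "F \<subseteq> E" "F' \<subseteq> E"
    and "card A = p" "card A' = p" "card F = q" "card F' = q"
    and "\<forall>v\<in>A \<union> A'. \<forall>f\<in>F \<union> F'. v \<notin> f"
  shows "(tj_step (is_biclique (H_vertices V E) (H_edges V E) p q))\<^sup>*\<^sup>*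
           (Inl ` A \<union> Inr ` F) (Inl ` A' \<union> Inr ` F')"
proof -
  let ?P = "is_biclique (H_vertices V E) (H_edges V E) p q"
  note simple_graph_finite[OF assms(1)]
  then have fin: "finite A" "finite A'" "finite F" "finite F'"
    using assms(2-5) by (auto intro: finite_subset)
  have "(tj_step (\<lambda>G. ?P (Inr ` F \<union> Inl ` G)))\<^sup>*\<^sup>* A A'"
  proof (rule rtranclp_tj_step_exchange)
    show "?P (Inr ` F \<union> Inl ` G)" if "G \<subseteq> A \<union> A'" "card G = card A" for G
    proof -
      have "G \<subseteq> V"
        using that(1) assms(2,3) by blast
      have "card G = p"
        using that(2) assms(6) by simp
      have "\<forall>v\<in>G. \<forall>f\<in>F. v \<notin> f"
        using that(1) assms(10) by blast
      with \<open>G \<subseteq> V\<close> \<open>card G = p\<close> have "?P (Inl ` G \<union> Inr ` F)"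
        by (rule is_biclique_H[OF assms(1) _ assms(4) _ assms(8)])
      then show ?thesis
        by (simp only: Un_commute)
    qed
  qed (use fin assms(6,7) in simp_all)
  then have "(tj_step ?P)\<^sup>*\<^sup>* (Inr ` F \<union> Inl ` A) (Inr ` F \<union> Inl ` A')"
    by (rule rtranclp_tj_step_image[where g = Inl and B = "Inr ` F", rotated 2]) auto
  moreover have "(tj_step (\<lambda>G. ?P (Inl ` A' \<union> Inr ` G)))\<^sup>*\<^sup>* F F'"
  proof (rule rtranclp_tj_step_exchange)
    show "?P (Inl ` A' \<union> Inr ` G)" if "G \<subseteq> F \<union> F'" "card G = card F" for G
    proof -
      have "G \<subseteq> E"
        using that(1) assms(4,5) by blast
      have "card G = q"
        using that(2) assms(8) by simp
      have "\<forall>v\<in>A'. \<forall>f\<in>G. v \<notin> f"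
        using that(1) assms(10) by blast
      with \<open>G \<subseteq> E\<close> \<open>card G = q\<close> show ?thesis
        by (rule is_biclique_H[OF assms(1,3) _ assms(7)])
    qed
  qed (use fin assms(8,9) in simp_all)
  then have "(tj_step ?P)\<^sup>*\<^sup>* (Inl ` A' \<union> Inr ` F) (Inl ` A' \<union> Inr ` F')"
    by (rule rtranclp_tj_step_image[where g = Inr and B = "Inl ` A'", rotated 2]) auto
  ultimately show ?thesis
    by (simp add: Un_commute)
qed

lemma card_edges_in_clique:
  assumes "simple_graph V E" "is_clique V E k K"
  shows "card (edges_in E K) = k choose 2"
proof -
  have "edges_in E K = {e. e \<subseteq> K \<and> card e = 2}"
    using assms by (auto simp: edges_in_def simple_graph_def is_clique_def card_2_iff)
  then show ?thesis
    using assms(2) n_subsets[of K 2] by (simp add: is_clique_def)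
qed

definition clique_biclique :: "'a set \<Rightarrow> 'a set set \<Rightarrow> 'a set \<Rightarrow> 'a \<Rightarrow> ('a + 'a set) set" where
  "clique_biclique V E K x = Inl ` (V - K - {x}) \<union> Inr ` edges_in E K"

lemma card_clique_biclique_parts:
  assumes "simple_graph V E" "is_clique V E k K" "x \<in> V - K"
    and "p = card V - k - 1" "k choose 2 = p"
  shows "card (V - K - {x}) = p" "card (edges_in E K) = p"
proof -
  have "card (V - K) = card V - k"
    using assms(1,2) by (simp add: simple_graph_def is_clique_def card_Diff_subset)
  then show "card (V - K - {x}) = p"
    using assms(3,4) by (simp add: card_Diff_singleton)
  show "card (edges_in E K) = p"
    using card_edges_in_clique[OF assms(1,2)] assms(5) by simp
qed

lemma is_biclique_clique_biclique:
  assumes "simple_graph V E" "is_clique V E k K" "x \<in> V - K"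
    and "p = card V - k - 1" "k choose 2 = p"
  shows "is_biclique (H_vertices V E) (H_edges V E) p p (clique_biclique V E K x)"
  unfolding clique_biclique_def
  using card_clique_biclique_parts[OF assms] assms(1)
  by (intro is_biclique_H) (auto simp: edges_in_def)

text \<open>The hypotheses \<open>K' \<subseteq> insert x K\<close> and \<open>K \<subseteq> insert x' K'\<close> say exactly that neither
  vertex part \<open>V - K - {x}\<close>, \<open>V - K' - {x'}\<close> meets \<open>K \<union> K'\<close>.\<close>

lemma clique_bicliques_connected:
  assumes "simple_graph V E" "is_clique V E k K" "is_clique V E k K'"
    and "x \<in> V - K" "x' \<in> V - K'" "K' \<subseteq> insert x K" "K \<subseteq> insert x' K'"
    and "p = card V - k - 1" "k choose 2 = p"
  shows "(tj_step (is_biclique (H_vertices V E) (H_edges V E) p p))\<^sup>*\<^sup>*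
           (clique_biclique V E K x) (clique_biclique V E K' x')"
  unfolding clique_biclique_def
proof (rule H_bicliques_connected)
  show "card (V - K - {x}) = p" "card (edges_in E K) = p"
    using card_clique_biclique_parts[OF assms(1,2,4,8,9)] by auto
  show "card (V - K' - {x'}) = p" "card (edges_in E K') = p"
    using card_clique_biclique_parts[OF assms(1,3,5,8,9)] by auto
  show "\<forall>v\<in>(V - K - {x}) \<union> (V - K' - {x'}). \<forall>f\<in>edges_in E K \<union> edges_in E K'. v \<notin> f"
    using assms(6,7) by (auto simp: edges_in_def)
qed (auto simp: assms(1) edges_in_def)

lemma tj_step_clique_bicliques_connected:
  assumes "simple_graph V E" "tj_step (is_clique V E k) K K'"
    and "x \<in> V - K" "x' \<in> V - K'" "p = card V - k - 1" "k choose 2 = p"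
  shows "(tj_step (is_biclique (H_vertices V E) (H_edges V E) p p))\<^sup>*\<^sup>*
           (clique_biclique V E K x) (clique_biclique V E K' x')"
proof -
  have K: "is_clique V E k K" "is_clique V E k K'" "card (K - K') = 1" "card (K' - K) = 1"
    using assms(2) by (auto simp: tj_step_def)
  then obtain u w where u: "K - K' = {u}" and w: "K' - K = {w}"
    by (auto simp: card_1_singleton_iff)
  have "u \<in> V - K'" "w \<in> V - K"
    using u w K by (auto simp: is_clique_def)
  note connected = clique_bicliques_connected[OF assms(1) _ _ _ _ _ _ assms(5,6)]
  note rtranclp_trans[trans]
  have "(tj_step (is_biclique (H_vertices V E) (H_edges V E) p p))\<^sup>*\<^sup>*
           (clique_biclique V E K x) (clique_biclique V E K w)"
    using connected[OF K(1,1) assms(3) \<open>w \<in> V - K\<close>] by blast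
  also have "(tj_step (is_biclique (H_vertices V E) (H_edges V E) p p))\<^sup>*\<^sup>*
           \<dots> (clique_biclique V E K' u)"
    using connected[OF K(1,2) \<open>w \<in> V - K\<close> \<open>u \<in> V - K'\<close>] u w by blast
  also have "(tj_step (is_biclique (H_vertices V E) (H_edges V E) p p))\<^sup>*\<^sup>*
           \<dots> (clique_biclique V E K' x')"
    using connected[OF K(2,2) \<open>u \<in> V - K'\<close> assms(4)] by blast
  finally show ?thesis .
qed

lemma clique_reconfiguration_imp_biclique_reconfiguration:
  assumes "(tj_step (is_clique V E k))\<^sup>*\<^sup>* K K'"
    and "simple_graph V E" "is_clique V E k K" "k < card V"
    and "x \<in> V - K" "x' \<in> V - K'" "p = card V - k - 1" "k choose 2 = p"
  shows "(tj_step (is_biclique (H_vertices V E) (H_edges V E) p p))\<^sup>*\<^sup>*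
           (clique_biclique V E K x) (clique_biclique V E K' x')"
  using assms(1,6)
proof (induction arbitrary: x' rule: rtranclp_induct)
  case base
  then show ?case
    using clique_bicliques_connected[OF assms(2,3,3,5) _ _ _ assms(7,8)] by blast
next
  case (step Y Z)
  have "is_clique V E k Y"
    using step.hyps(2) by (simp add: tj_step_def)
  then have "\<not> V \<subseteq> Y"
    using assms(2,4) by (auto simp: simple_graph_def is_clique_def dest: card_mono)
  then obtain y where "y \<in> V - Y" by blast
  with step show ?case
    using tj_step_clique_bicliques_connected[OF assms(2) step.hyps(2) _ _ assms(7,8)]
    by (blast intro: rtranclp_trans)
qed

theorem lemma3:
  fixes V :: "'a set" and E :: "'a set set" and k p :: nat
    and K K' :: "'a set" and x x' :: 'a
  assumes "simple_graph V E"
    and "\<not> bipartite V E"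
    and "card V \<ge> 5"
    and "is_clique V E k K" and "is_clique V E k K'"
    and "int (card V) - int k - 1 = int (k choose 2)"
    and "p = card V - k - 1"
    and "x \<in> V - K" and "x' \<in> V - K'"
    and "\<exists>xs. tj_seq (is_clique V E k) xs K K'"
  shows "\<exists>ys. tj_seq (is_biclique (H_vertices V E) (H_edges V E) p p) ys
            ((Inl ` (V - K) \<union> Inr ` edges_in E K) - {Inl x})
            ((Inl ` (V - K') \<union> Inr ` edges_in E K') - {Inl x'})"
proof -
  have "k < card V" "k choose 2 = p"
    using assms(6,7) by linarith+
  obtain xs where "tj_seq (is_clique V E k) xs K K'"
    using assms(10) by blast
  then have "(tj_step (is_clique V E k))\<^sup>*\<^sup>* K K'"
    by (rule tj_seq_imp_rtranclp)
  then have "(tj_step (is_biclique (H_vertices V E) (H_edges V E) p p))\<^sup>*\<^sup>*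
               (clique_biclique V E K x) (clique_biclique V E K' x')"
    using assms(1,4) \<open>k < card V\<close> assms(8,9,7) \<open>k choose 2 = p\<close>
    by (rule clique_reconfiguration_imp_biclique_reconfiguration)
  then obtain ys where "tj_seq (is_biclique (H_vertices V E) (H_edges V E) p p) ys
                          (clique_biclique V E K x) (clique_biclique V E K' x')"
    using rtranclp_imp_tj_seq is_biclique_clique_biclique[OF assms(1,4,8,7) \<open>k choose 2 = p\<close>]
    by blast
  moreover have "clique_biclique V E L y = (Inl ` (V - L) \<union> Inr ` edges_in E L) - {Inl y}" for L y
    by (auto simp: clique_biclique_def)
  ultimately show ?thesis
    by auto
qed

end
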